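(* Let $K,G,m_0,A_g,B_g,\bar f_c,\bar f_t>0$, $e\in[0.5,1]$, and let $m_g(p)=A_gB_g\bar f_c\,e^{\frac{p-\bar f_t/3}{B_g\bar f_c}}$, so $m_g'(p)=A_g e^{\frac{p-\bar f_t/3}{B_g\bar f_c}}$. Let $\hat f(p,\varrho,\varrho_e)=\frac32\left(\frac{\varrho}{\bar f_c}\right)^2+m_0\left(\frac{\varrho_e}{\sqrt6\bar f_c}+\frac{p}{\bar f_c}\right)-1$. Let $\boldsymbol\sigma^{tr}\in\mathbb R^{3\times3}_{sym}$ be given with $p^{tr}=p(\boldsymbol\sigma^{tr})$, $\mathbf s^{tr}=\mathbf s(\boldsymbol\sigma^{tr})$, $\varrho^{tr}=\|\mathbf s^{tr}\|$, $\mathbf n^{tr}=\mathbf s^{tr}/\varrho^{tr}$, $\theta^{tr}=\theta(\boldsymbol\sigma^{tr})$, $r_e^{tr}=r_e(\cos\theta^{tr})$, $\varrho_e^{tr}=\varrho_e(\boldsymbol\sigma^{tr})$, and assume $\hat f(p^{tr},\varrho^{tr},\varrho_e^{tr})>0$. Consider the problem (P): find $\boldsymbol\sigma\in\mathbb R^{3\times3}_{sym}$ and $\triangle\lambda$ with $$\boldsymbol\sigma=\boldsymbol\sigma^{tr}-\triangle\lambda\Big[K\tfrac{m_g'(p(\boldsymbol\sigma))}{\bar f_c}\mathbf I+2G\Big(\tfrac{3\varrho(\boldsymbol\sigma)}{\bar f_c^2}+\tfrac{m_0}{\sqrt6\bar f_c}\Big)\hat{\mathbf n}\Big]\ \text{for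 some }\hat{\mathbf n}\in\partial\varrho(\boldsymbol\sigma),$$ $\triangle\lambda\ge0$, $\hat f(p(\boldsymbol\sigma),\varrho(\boldsymbol\sigma),\varrho_e(\boldsymbol\sigma))\le0$, $\triangle\lambda\hat f(p(\boldsymbol\sigma),\varrho(\boldsymbol\sigma),\varrho_e(\boldsymbol\sigma))=0$. If $(\boldsymbol\sigma,\triangle\lambda)$ solves (P) and $p=p(\boldsymbol\sigma)$, $\varrho=\varrho(\boldsymbol\sigma)$, then $(p,\varrho,\triangle\lambda)$ solves the system (R): $$p=p^{tr}-\triangle\lambda K\tfrac{m_g'(p)}{\bar f_c},\quad \varrho=\Big[\varrho^{tr}-\triangle\lambda 2G\Big(\tfrac{3\varrho}{\bar f_c^2}+\tfrac{m_0}{\sqrt6\bar f_c}\Big)\Big]^+,\quad \hat f(p,\varrho,\varrho r_e^{tr})=0.$$ Conversely, if $(p,\varrho,\triangle\lambda)$ solves (R), then $(\boldsymbol\sigma,\triangle\lambda)$ solves (P), where $\boldsymbol\sigma=p\mathbf I+\varrho\mathbf n^{tr}$ if $\varrho^{tr}>\triangle\lambda2G\big(\frac{3\varrho}{\bar f_c^2}+\frac{m_0}{\sqrt6\bar f_c}\big)$ and $\boldsymbol\sigma=p\mathbf I$ otherwise.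
   Context: $\mathbb R^{3\times3}_{sym}$: real symmetric $3\times3$ matrices with Frobenius product ":" and norm; $\mathbf I$ identity; $p(\boldsymbol\sigma)=\frac13\mathbf I:\boldsymbol\sigma$, $\mathbf s(\boldsymbol\sigma)=\boldsymbol\sigma-p(\boldsymbol\sigma)\mathbf I$, $\varrho(\boldsymbol\sigma)=\|\mathbf s(\boldsymbol\sigma)\|$; for $\varrho(\boldsymbol\sigma)>0$, $\theta(\boldsymbol\sigma)=\frac13\arccos\big(\frac{3\sqrt3}{2}J_3/J_2^{3/2}\big)$ with $J_2=\frac12\mathbf s:\mathbf s$, $J_3=\frac13\mathbf s^3:\mathbf I$. $r_e(\cos\theta)=\frac{4(1-e^2)\cos^2\theta+(2e-1)^2}{2(1-e^2)\cos\theta+(2e-1)\sqrt{4(1-e^2)\cos^2\theta+5e^2-4e}}$; $\varrho_e(\boldsymbol\sigma)=\varrho(\boldsymbol\sigma)r_e(\cos\theta(\boldsymbol\sigma))$ if $\varrho(\boldsymbol\sigma)>0$ and $0$ otherwise. When $\varrho^{tr}=0$ the quantity $\varrho r_e^{tr}$ is interpreted as $0$. $(x)^+=\max\{0,x\}$. $\partial\varrho(\boldsymbol\sigma)=\{\mathbf s(\boldsymbol\sigma)/\varrho(\boldsymbol\sigma)\}$ if $\varrho(\boldsymbol\sigma)>0$, and $\{\hat{\mathbf n}\in\mathbb R^{3\times3}_{sym}:\mathbf I:\hat{\mathbf n}=0,\|\hat{\mathbf n}\|\le1\}$ if $\varrho(\boldsymbol\sigma)=0$. *)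

theory Defs
  imports "HOL-Analysis.Analysis"
begin

text \<open>Real 3x3 matrices; the Frobenius product is the inner product on real^3^3
  and the Frobenius norm is norm.  Symmetric matrices: transpose A = A.\<close>

type_synonym mat3 = "real^3^3"

definition sym3 :: "mat3 \<Rightarrow> bool" where
  "sym3 A \<longleftrightarrow> transpose A = A"

definition Id3 :: mat3 where "Id3 = mat 1"

definition pr :: "mat3 \<Rightarrow> real" where
  "pr \<sigma> = (Id3 \<bullet> \<sigma>) / 3"

definition dev :: "mat3 \<Rightarrow> mat3" where
  "dev \<sigma> = \<sigma> - pr \<sigma> *\<^sub>R Id3"

definition rho :: "mat3 \<Rightarrow> real" where
  "rho \<sigma> = norm (dev \<sigma>)"

definition J2 :: "mat3 \<Rightarrow> real" where
  "J2 \<sigma> = (dev \<sigma> \<bullet> dev \<sigma>) / 2"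

definition J3 :: "mat3 \<Rightarrow> real" where
  "J3 \<sigma> = ((dev \<sigma> ** dev \<sigma> ** dev \<sigma>) \<bullet> Id3) / 3"

definition theta :: "mat3 \<Rightarrow> real" where
  "theta \<sigma> = arccos (3 * sqrt 3 / 2 * J3 \<sigma> / (J2 \<sigma> powr (3/2))) / 3"

definition r_e :: "real \<Rightarrow> real \<Rightarrow> real" where
  "r_e e c = (4 * (1 - e\<^sup>2) * c\<^sup>2 + (2*e - 1)\<^sup>2) /
     (2 * (1 - e\<^sup>2) * c + (2*e - 1) * sqrt (4 * (1 - e\<^sup>2) * c\<^sup>2 + 5 * e\<^sup>2 - 4 * e))"

definition rho_e :: "real \<Rightarrow> mat3 \<Rightarrow> real" where
  "rho_e e \<sigma> = (if rho \<sigma> > 0 then rho \<sigma> * r_e e (cos (theta \<sigma>)) else 0)"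

definition subdiff_rho :: "mat3 \<Rightarrow> mat3 set" where
  "subdiff_rho \<sigma> = (if rho \<sigma> > 0 then {dev \<sigma> /\<^sub>R rho \<sigma>}
      else {n. sym3 n \<and> Id3 \<bullet> n = 0 \<and> norm n \<le> 1})"

definition pos_part :: "real \<Rightarrow> real" where
  "pos_part x = max 0 x"

definition mg' :: "real \<Rightarrow> real \<Rightarrow> real \<Rightarrow> real \<Rightarrow> real \<Rightarrow> real" where
  "mg' Ag Bg fc ft p = Ag * exp ((p - ft / 3) / (Bg * fc))"

definition fhat :: "real \<Rightarrow> real \<Rightarrow> real \<Rightarrow> real \<Rightarrow> real \<Rightarrow> real" where
  "fhat m0 fc p r re = 3/2 * (r / fc)\<^sup>2 + m0 * (re / (sqrt 6 * fc) + p / fc) - 1"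

definition probP ::
  "real \<Rightarrow> real \<Rightarrow> real \<Rightarrow> real \<Rightarrow> real \<Rightarrow> real \<Rightarrow> real \<Rightarrow> real \<Rightarrow> mat3 \<Rightarrow> mat3 \<Rightarrow> real \<Rightarrow> bool" where
  "probP K G m0 Ag Bg fc ft e \<sigma>tr \<sigma> dl \<longleftrightarrow>
     sym3 \<sigma> \<and>
     (\<exists>n \<in> subdiff_rho \<sigma>.
        \<sigma> = \<sigma>tr - dl *\<^sub>R (K * mg' Ag Bg fc ft (pr \<sigma>) / fc) *\<^sub>R Id3
               - dl *\<^sub>R (2 * G * (3 * rho \<sigma> / fc\<^sup>2 + m0 / (sqrt 6 * fc))) *\<^sub>R n) \<and>
     dl \<ge> 0 \<and>
     fhat m0 fc (pr \<sigma>) (rho \<sigma>) (rho_e e \<sigma>) \<le> 0 \<and>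
     dl * fhat m0 fc (pr \<sigma>) (rho \<sigma>) (rho_e e \<sigma>) = 0"

text \<open>System (R); the term rho * r_e^tr is read as 0 when rho^tr = 0.\<close>
definition sysR ::
  "real \<Rightarrow> real \<Rightarrow> real \<Rightarrow> real \<Rightarrow> real \<Rightarrow> real \<Rightarrow> real \<Rightarrow> real \<Rightarrow> mat3 \<Rightarrow> real \<Rightarrow> real \<Rightarrow> real \<Rightarrow> bool" where
  "sysR K G m0 Ag Bg fc ft e \<sigma>tr p r dl \<longleftrightarrow>
     p = pr \<sigma>tr - dl * K * mg' Ag Bg fc ft p / fc \<and>
     r = pos_part (rho \<sigma>tr - dl * 2 * G * (3 * r / fc\<^sup>2 + m0 / (sqrt 6 * fc))) \<and>
     fhat m0 fc p r (if rho \<sigma>tr > 0 then r * r_e e (cos (theta \<sigma>tr)) else 0) = 0"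

end

theory Submission
  imports Defs
begin

text \<open>Write a stress as pressure times the identity plus deviator. For a traceless subgradient n,
  the update \<sigma> = \<sigma>_tr - a I - \<beta> n splits into the scalar pressure equation and the deviatoric
  equation s_tr = s + \<beta> n. The latter is a radial return: if s \<noteq> 0 then n = s / |s|, so s_tr is a
  positive multiple of s, |s_tr| = |s| + \<beta>, and the Lode angle is unchanged; if s = 0 then
  |s_tr| = \<beta> |n| \<le> \<beta>. Either way \<rho> = (\<rho>_tr - \<beta>)^+ and \<rho>_e(\<sigma>) = \<rho> r_e^tr, which turns (P) into
  (R); the multiplier is positive because the trial stress violates the yield condition.

  Conversely, the multiplier of a solution of (R) is nonnegative: otherwise p > p_tr and
  \<rho> \<ge> \<rho>_tr, and since r_e^tr \<ge> 0 (the Lode angle lies in [0, \<pi>/3], so cos \<theta> \<ge> 1/2) the yield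
  function would exceed its positive trial value.\<close>

lemma inner_mat3:
  "(A::mat3) \<bullet> B = A$1$1*B$1$1 + A$1$2*B$1$2 + A$1$3*B$1$3 + A$2$1*B$2$1 + A$2$2*B$2$2
     + A$2$3*B$2$3 + A$3$1*B$3$1 + A$3$2*B$3$2 + A$3$3*B$3$3"
  by (simp add: inner_vec_def sum_3 add.assoc)

lemma matrix_mult_mat3_nth: "((A::mat3) ** B)$i$j = A$i$1*B$1$j + A$i$2*B$2$j + A$i$3*B$3$j"
  by (simp add: matrix_matrix_mult_def sum_3)

lemma Id3_nth: "Id3$i$j = (if i = j then 1 else 0)"
  by (simp add: Id3_def mat_def)

lemma Id3_inner_Id3: "Id3 \<bullet> Id3 = 3"
  by (simp add: inner_mat3 Id3_nth)

lemma sym3_nth: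
  assumes "sym3 s"
  shows "s$i$j = s$j$i"
  using arg_cong[where f="\<lambda>A. A$j$i", OF assms[unfolded sym3_def]] by (simp add: transpose_def)

lemma sym3_offdiag:
  assumes "sym3 s"
  shows "s$2$1 = s$1$2" "s$3$1 = s$1$3" "s$3$2 = s$2$3"
  using sym3_nth[OF assms] by blast+

lemma sym3_square_trace: "sym3 s \<Longrightarrow> (s ** s) \<bullet> Id3 = s \<bullet> s"
  unfolding inner_mat3 matrix_mult_mat3_nth Id3_nth by (simp add: sym3_offdiag algebra_simps)

lemma sym3_cube_trace: "sym3 s \<Longrightarrow> (s ** s ** s) \<bullet> Id3 = (s ** s) \<bullet> s"
  unfolding inner_mat3 matrix_mult_mat3_nth Id3_nth by (simp add: sym3_offdiag algebra_simps)

lemma traceless_sym3_square_norm: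
  assumes "sym3 s" "Id3 \<bullet> s = 0"
  shows "2 * ((s ** s) \<bullet> (s ** s)) = (s \<bullet> s)\<^sup>2"
proof -
  have trace: "s$3$3 = - s$1$1 - s$2$2" using assms(2) by (simp add: inner_mat3 Id3_nth)
  show ?thesis
    unfolding inner_mat3 matrix_mult_mat3_nth sym3_offdiag[OF assms(1)] trace
    by (simp add: algebra_simps power2_eq_square)
qed

text \<open>Cauchy-Schwarz, applied to s and to the deviator of s ** s.\<close>
lemma traceless_sym3_cube_bound:
  assumes "sym3 s" "Id3 \<bullet> s = 0"
  shows "6 * ((s ** s) \<bullet> s)\<^sup>2 \<le> (s \<bullet> s) ^ 3"
proof -
  define N where "N = s \<bullet> s"
  define w where "w = s ** s - (N / 3) *\<^sub>R Id3"
  have ws: "w \<bullet> s = (s ** s) \<bullet> s"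
    using assms(2) by (simp add: w_def inner_diff_left)
  have "w \<bullet> w = (s ** s) \<bullet> (s ** s) - 2 * (N / 3) * ((s ** s) \<bullet> Id3) + (N / 3)\<^sup>2 * (Id3 \<bullet> Id3)"
    by (simp add: w_def inner_diff_left inner_diff_right inner_commute algebra_simps power2_eq_square)
  also have "\<dots> = N\<^sup>2 / 6"
    using traceless_sym3_square_norm[OF assms] sym3_square_trace[OF assms(1)]
    by (simp add: N_def Id3_inner_Id3 field_simps power2_eq_square)
  finally have ww: "w \<bullet> w = N\<^sup>2 / 6" .
  have "((s ** s) \<bullet> s)\<^sup>2 \<le> (w \<bullet> w) * N"
    using Cauchy_Schwarz_ineq[of w s] by (simp add: ws N_def)
  then show ?thesis
    by (simp add: ww N_def power2_eq_square power3_eq_cube)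
qed

lemma pr_Id3 [simp]: "pr Id3 = 1"
  by (simp add: pr_def Id3_inner_Id3)

lemma pr_add: "pr (x + y) = pr x + pr y"
  by (simp add: pr_def inner_add_right add_divide_distrib)

lemma pr_diff: "pr (x - y) = pr x - pr y"
  by (simp add: pr_def inner_diff_right diff_divide_distrib)

lemma pr_scaleR: "pr (c *\<^sub>R x) = c * pr x"
  by (simp add: pr_def)

lemma Id3_inner_dev [simp]: "Id3 \<bullet> dev x = 0"
  by (simp add: dev_def pr_def inner_diff_right Id3_inner_Id3)

lemma pr_dev [simp]: "pr (dev x) = 0"
  by (simp add: pr_def)

lemma dev_add: "dev (x + y) = dev x + dev y"
  by (simp add: dev_def pr_add scaleR_add_left)

lemma dev_diff: "dev (x - y) = dev x - dev y"
  by (simp add: dev_def pr_diff scaleR_diff_left)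

lemma dev_scaleR: "dev (c *\<^sub>R x) = c *\<^sub>R dev x"
  by (simp add: dev_def pr_scaleR scaleR_diff_right)

lemma dev_Id3 [simp]: "dev Id3 = 0"
  by (simp add: dev_def)

lemma dev_traceless: "Id3 \<bullet> n = 0 \<Longrightarrow> dev n = n"
  by (simp add: dev_def pr_def)

lemma dev_dev [simp]: "dev (dev x) = dev x"
  by (rule dev_traceless[OF Id3_inner_dev])

lemma sym3_add: "sym3 x \<Longrightarrow> sym3 y \<Longrightarrow> sym3 (x + y)"
  by (simp add: sym3_def transpose_def vec_eq_iff)

lemma sym3_scaleR: "sym3 x \<Longrightarrow> sym3 (c *\<^sub>R x)"
  by (simp add: sym3_def transpose_scalar)

lemma sym3_Id3: "sym3 Id3"
  by (simp add: sym3_def Id3_def)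

lemma sym3_diff: "sym3 x \<Longrightarrow> sym3 y \<Longrightarrow> sym3 (x - y)"
  by (simp add: sym3_def transpose_def vec_eq_iff)

lemma sym3_dev: "sym3 x \<Longrightarrow> sym3 (dev x)"
  unfolding dev_def by (intro sym3_diff sym3_scaleR sym3_Id3)

lemma rho_nonneg: "0 \<le> rho x"
  by (simp add: rho_def)

lemma rho_eq_0_iff: "rho x = 0 \<longleftrightarrow> dev x = 0"
  by (simp add: rho_def)

lemma J2_eq_rho: "J2 \<sigma> = (rho \<sigma>)\<^sup>2 / 2"
  by (simp add: J2_def rho_def power2_norm_eq_inner)

lemma J3_sym3: "sym3 \<sigma> \<Longrightarrow> J3 \<sigma> = ((dev \<sigma> ** dev \<sigma>) \<bullet> dev \<sigma>) / 3"
  by (simp add: J3_def sym3_cube_trace sym3_dev)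

lemma lode_argument_bound:
  assumes "sym3 \<sigma>"
  shows "\<bar>3 * sqrt 3 / 2 * J3 \<sigma> / J2 \<sigma> powr (3/2)\<bar> \<le> 1"
proof (cases "rho \<sigma> = 0")
  case True
  \<comment> \<open>then the argument is 0, as 0 powr a = 0 and x / 0 = 0\<close>
  then show ?thesis by (simp add: J2_eq_rho)
next
  case False
  define s where "s = dev \<sigma>"
  define N where "N = s \<bullet> s"
  define x where "x = (s ** s) \<bullet> s"
  have N: "N = (rho \<sigma>)\<^sup>2"
    by (simp add: N_def s_def rho_def power2_norm_eq_inner)
  have Npos: "N > 0"
    using False by (simp add: N)
  have J2: "J2 \<sigma> = N / 2"
    by (simp add: J2_eq_rho N)
  have J3: "J3 \<sigma> = x / 3"
    by (simp add: J3_sym3[OF assms] x_def s_def)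
  have "(J2 \<sigma> powr (3/2))\<^sup>2 = J2 \<sigma> powr (real 3)"
    using Npos by (simp add: J2 powr_power)
  also have "\<dots> = (N / 2) ^ 3"
    using Npos by (simp add: J2 powr_realpow)
  finally have D: "(J2 \<sigma> powr (3/2))\<^sup>2 = (N / 2) ^ 3" .
  have "(3 * sqrt 3 / 2 * J3 \<sigma> / J2 \<sigma> powr (3/2))\<^sup>2 = 27 / 4 * (J3 \<sigma>)\<^sup>2 / (J2 \<sigma> powr (3/2))\<^sup>2"
    by (simp add: power_divide power_mult_distrib)
  also have "\<dots> = 6 * x\<^sup>2 / N ^ 3"
    unfolding D J3 by (simp add: power_divide)
  also have "\<dots> \<le> 1"
    using traceless_sym3_cube_bound[of s] Npos assms by (simp add: N_def x_def s_def sym3_dev)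
  finally show ?thesis
    by (simp add: abs_square_le_1)
qed

lemma cos_theta_ge_half:
  assumes "sym3 \<sigma>"
  shows "1/2 \<le> cos (theta \<sigma>)"
proof -
  define y where "y = 3 * sqrt 3 / 2 * J3 \<sigma> / J2 \<sigma> powr (3/2)"
  have "\<bar>y\<bar> \<le> 1"
    unfolding y_def by (rule lode_argument_bound[OF assms])
  then have y: "-1 \<le> y" "y \<le> 1"
    by auto
  have "0 \<le> theta \<sigma>" "theta \<sigma> \<le> pi / 3"
    using arccos_lbound[OF y] arccos_ubound[OF y] by (auto simp: theta_def y_def)
  then have "cos (pi / 3) \<le> cos (theta \<sigma>)"
    by (intro cos_monotone_0_pi_le) auto
  then show ?thesis
    by (simp add: cos_60)
qed

lemma r_e_nonneg:
  assumes "1/2 \<le> e" "e \<le> 1" "1/2 \<le> c"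
  shows "0 \<le> r_e e c"
proof -
  have e: "0 \<le> 1 - e\<^sup>2" "0 \<le> 2 * e - 1"
    using assms(1,2) by (auto simp: power_le_one)
  have "1/4 \<le> c\<^sup>2"
    using power_mono[OF assms(3), of 2] by (simp add: power2_eq_square)
  then have "(1 - e\<^sup>2) * (1/4) \<le> (1 - e\<^sup>2) * c\<^sup>2"
    by (rule mult_left_mono[OF _ e(1)])
  then have "0 \<le> (2 * e - 1)\<^sup>2 + (4 * ((1 - e\<^sup>2) * c\<^sup>2) - (1 - e\<^sup>2))"
    by simp
  also have "\<dots> = 4 * (1 - e\<^sup>2) * c\<^sup>2 + 5 * e\<^sup>2 - 4 * e"
    by (simp add: algebra_simps power2_eq_square)
  finally have "0 \<le> 4 * (1 - e\<^sup>2) * c\<^sup>2 + 5 * e\<^sup>2 - 4 * e" .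
  then show ?thesis
    unfolding r_e_def using e assms(3)
    by (intro divide_nonneg_nonneg add_nonneg_nonneg mult_nonneg_nonneg) auto
qed

lemma theta_dev_scaleR:
  assumes "dev s = c *\<^sub>R dev t" "0 < c"
  shows "theta s = theta t"
proof -
  have J2: "J2 s = c\<^sup>2 * J2 t"
    using assms by (simp add: J2_def power2_eq_square)
  have J3: "J3 s = c ^ 3 * J3 t"
    using assms by (simp add: J3_def scalar_matrix_assoc[symmetric] matrix_scalar_ac power3_eq_cube)
  have "c powr 2 = c\<^sup>2"
    using assms(2) by simp
  then have "(c\<^sup>2) powr (3/2) = (c powr 2) powr (3/2)"
    by simp
  also have "\<dots> = c ^ 3"
    unfolding powr_powr using assms(2) by simp
  finally have "(c\<^sup>2) powr (3/2) = c ^ 3" .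
  moreover have "0 \<le> J2 t"
    by (simp add: J2_def)
  ultimately have "J2 s powr (3/2) = c ^ 3 * J2 t powr (3/2)"
    unfolding J2 by (simp add: powr_mult)
  then show ?thesis
    using assms(2) by (simp add: theta_def J3 mult.assoc)
qed

lemma fhat_strict_mono:
  assumes "0 < m0" "0 < fc" "0 \<le> q" "p < p'" "0 \<le> r" "r \<le> r'"
  shows "fhat m0 fc p r (r * q) < fhat m0 fc p' r' (r' * q)"
proof -
  have "(r / fc)\<^sup>2 \<le> (r' / fc)\<^sup>2"
    using assms by (intro power_mono divide_right_mono) auto
  moreover have "r * q / (sqrt 6 * fc) \<le> r' * q / (sqrt 6 * fc)"
    using assms by (intro divide_right_mono mult_right_mono) auto
  moreover have "p / fc < p' / fc"
    using assms by (simp add: divide_strict_right_mono)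
  ultimately have "m0 * (r * q / (sqrt 6 * fc) + p / fc) < m0 * (r' * q / (sqrt 6 * fc) + p' / fc)"
    using assms(1) by (intro mult_strict_left_mono) auto
  with \<open>(r / fc)\<^sup>2 \<le> (r' / fc)\<^sup>2\<close> show ?thesis
    unfolding fhat_def by linarith
qed

lemma subdiff_rho_traceless: "n \<in> subdiff_rho \<sigma> \<Longrightarrow> Id3 \<bullet> n = 0"
  by (auto simp: subdiff_rho_def split: if_splits)

lemma stress_update_iff:
  assumes "Id3 \<bullet> n = 0"
  shows "\<sigma> = \<sigma>tr - a *\<^sub>R Id3 - b *\<^sub>R n \<longleftrightarrow> pr \<sigma> = pr \<sigma>tr - a \<and> dev \<sigma>tr = dev \<sigma> + b *\<^sub>R n"
proof
  have pr_n: "pr n = 0"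
    using assms by (simp add: pr_def)
  show "\<sigma> = \<sigma>tr - a *\<^sub>R Id3 - b *\<^sub>R n \<Longrightarrow> pr \<sigma> = pr \<sigma>tr - a \<and> dev \<sigma>tr = dev \<sigma> + b *\<^sub>R n"
    by (simp add: pr_diff pr_scaleR pr_n dev_diff dev_scaleR dev_traceless[OF assms])
  have "\<sigma>tr - a *\<^sub>R Id3 - b *\<^sub>R n - \<sigma>
      = (pr \<sigma>tr - a - pr \<sigma>) *\<^sub>R Id3 + (dev \<sigma>tr - b *\<^sub>R n - dev \<sigma>)"
    by (simp add: dev_def algebra_simps)
  moreover assume "pr \<sigma> = pr \<sigma>tr - a \<and> dev \<sigma>tr = dev \<sigma> + b *\<^sub>R n"
  ultimately show "\<sigma> = \<sigma>tr - a *\<^sub>R Id3 - b *\<^sub>R n"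
    by simp
qed

lemma radial_return:
  assumes n: "n \<in> subdiff_rho \<sigma>" and dev: "dev \<sigma>tr = dev \<sigma> + \<beta> *\<^sub>R n" and "0 \<le> \<beta>"
  shows "rho \<sigma> = pos_part (rho \<sigma>tr - \<beta>)"
    and "rho_e e \<sigma> = rho \<sigma> * (if rho \<sigma>tr > 0 then r_e e (cos (theta \<sigma>tr)) else 0)"
proof -
  have "rho \<sigma> = pos_part (rho \<sigma>tr - \<beta>) \<and>
      rho_e e \<sigma> = rho \<sigma> * (if rho \<sigma>tr > 0 then r_e e (cos (theta \<sigma>tr)) else 0)"
  proof (cases "rho \<sigma> > 0")
    case True
    define c where "c = 1 + \<beta> / rho \<sigma>"
    have c: "0 < c"
      using True \<open>0 \<le> \<beta>\<close> by (simp add: c_def add_pos_nonneg)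
    have dev_tr: "dev \<sigma>tr = c *\<^sub>R dev \<sigma>"
      using dev n True by (simp add: subdiff_rho_def c_def scaleR_add_left divide_inverse)
    then have "rho \<sigma>tr = rho \<sigma> + \<beta>"
      using c True by (simp add: rho_def c_def distrib_right)
    moreover have "theta \<sigma> = theta \<sigma>tr"
      using dev_tr c by (intro theta_dev_scaleR[of _ "1 / c"]) auto
    ultimately show ?thesis
      using True \<open>0 \<le> \<beta>\<close> by (simp add: rho_e_def pos_part_def)
  next
    case False
    then have "dev \<sigma> = 0" "rho \<sigma> = 0"
      using rho_nonneg[of \<sigma>] by (auto simp: rho_eq_0_iff)
    then have "rho \<sigma>tr = \<beta> * norm n" "norm n \<le> 1"
      using dev n \<open>0 \<le> \<beta>\<close> by (auto simp: rho_def subdiff_rho_def)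
    then have "rho \<sigma>tr \<le> \<beta>"
      using mult_left_le[OF _ \<open>0 \<le> \<beta>\<close>] by simp
    then show ?thesis
      using \<open>rho \<sigma> = 0\<close> by (simp add: rho_e_def pos_part_def)
  qed
  then show "rho \<sigma> = pos_part (rho \<sigma>tr - \<beta>)"
    and "rho_e e \<sigma> = rho \<sigma> * (if rho \<sigma>tr > 0 then r_e e (cos (theta \<sigma>tr)) else 0)"
    by auto
qed

lemma radial_return_exists:
  fixes p :: real
  assumes "sym3 \<sigma>tr" "0 \<le> \<beta>" "r = pos_part (rho \<sigma>tr - \<beta>)"
  defines "\<sigma> \<equiv> if \<beta> < rho \<sigma>tr then p *\<^sub>R Id3 + r *\<^sub>R (dev \<sigma>tr /\<^sub>R rho \<sigma>tr) else p *\<^sub>R Id3"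
  shows "sym3 \<sigma>" "pr \<sigma> = p" "\<exists>n\<in>subdiff_rho \<sigma>. dev \<sigma>tr = dev \<sigma> + \<beta> *\<^sub>R n"
proof -
  have "sym3 \<sigma> \<and> pr \<sigma> = p \<and> (\<exists>n\<in>subdiff_rho \<sigma>. dev \<sigma>tr = dev \<sigma> + \<beta> *\<^sub>R n)"
  proof (cases "\<beta> < rho \<sigma>tr")
    case True
    define n where "n = dev \<sigma>tr /\<^sub>R rho \<sigma>tr"
    have r: "r = rho \<sigma>tr - \<beta>" "0 < r"
      using True assms(3) by (auto simp: pos_part_def)
    have "0 < rho \<sigma>tr"
      using True \<open>0 \<le> \<beta>\<close> by linarith
    then have n_norm: "norm n = 1"
      by (simp add: n_def rho_def)
    have \<sigma>: "\<sigma> = p *\<^sub>R Id3 + r *\<^sub>R n"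
      using True by (simp add: \<sigma>_def n_def)
    have dev_\<sigma>: "dev \<sigma> = r *\<^sub>R n"
      by (simp add: \<sigma> dev_add dev_scaleR n_def)
    have "rho \<sigma> = r"
      using r n_norm by (simp add: rho_def dev_\<sigma>)
    then have "n \<in> subdiff_rho \<sigma>"
      using r by (simp add: subdiff_rho_def dev_\<sigma>)
    moreover have "(r + \<beta>) *\<^sub>R n = dev \<sigma>tr"
      using \<open>0 < rho \<sigma>tr\<close> by (simp add: n_def r(1))
    then have "dev \<sigma> + \<beta> *\<^sub>R n = dev \<sigma>tr"
      by (simp add: dev_\<sigma> scaleR_add_left)
    moreover have "sym3 \<sigma>"
      unfolding \<sigma> n_def by (intro sym3_add sym3_scaleR sym3_Id3 sym3_dev assms(1))
    moreover have "pr \<sigma> = p"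
      by (simp add: \<sigma> pr_add pr_scaleR n_def)
    ultimately show ?thesis
      by metis
  next
    case False
    \<comment> \<open>if \<beta> = 0 then dev \<sigma>tr = 0, so the junk value 1 / 0 = 0 does no harm\<close>
    define n where "n = (1 / \<beta>) *\<^sub>R dev \<sigma>tr"
    have \<sigma>: "\<sigma> = p *\<^sub>R Id3"
      using False by (simp add: \<sigma>_def)
    have "rho \<sigma> = 0"
      by (simp add: \<sigma> rho_eq_0_iff dev_scaleR)
    moreover have "norm n \<le> 1"
      using False \<open>0 \<le> \<beta>\<close> by (auto simp: n_def rho_def divide_le_eq_1)
    ultimately have "n \<in> subdiff_rho \<sigma>"
      by (simp add: subdiff_rho_def n_def sym3_scaleR sym3_dev assms(1))
    moreover have "dev \<sigma>tr = dev \<sigma> + \<beta> *\<^sub>R n"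
      using False \<open>0 \<le> \<beta>\<close> rho_nonneg[of \<sigma>tr]
      by (cases "\<beta> = 0") (auto simp: \<sigma> dev_scaleR n_def rho_eq_0_iff)
    ultimately show ?thesis
      by (auto simp: \<sigma> sym3_scaleR sym3_Id3 pr_scaleR)
  qed
  then show "sym3 \<sigma>" "pr \<sigma> = p" "\<exists>n\<in>subdiff_rho \<sigma>. dev \<sigma>tr = dev \<sigma> + \<beta> *\<^sub>R n"
    by auto
qed

lemma probP_imp_sysR:
  assumes "0 \<le> G" "0 \<le> m0" "0 \<le> fc"
    and trial: "0 < fhat m0 fc (pr \<sigma>tr) (rho \<sigma>tr) (rho_e e \<sigma>tr)"
    and P: "probP K G m0 Ag Bg fc ft e \<sigma>tr \<sigma> dl"
  shows "sysR K G m0 Ag Bg fc ft e \<sigma>tr (pr \<sigma>) (rho \<sigma>) dl"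
proof -
  define a where "a = dl * K * mg' Ag Bg fc ft (pr \<sigma>) / fc"
  define \<beta> where "\<beta> = dl * 2 * G * (3 * rho \<sigma> / fc\<^sup>2 + m0 / (sqrt 6 * fc))"
  obtain n where n: "n \<in> subdiff_rho \<sigma>" and update: "\<sigma> = \<sigma>tr - a *\<^sub>R Id3 - \<beta> *\<^sub>R n"
    and "0 \<le> dl" and admissible: "fhat m0 fc (pr \<sigma>) (rho \<sigma>) (rho_e e \<sigma>) \<le> 0"
    and complementary: "dl * fhat m0 fc (pr \<sigma>) (rho \<sigma>) (rho_e e \<sigma>) = 0"
    using P unfolding probP_def a_def \<beta>_def by (auto simp: mult.assoc)
  have pr_\<sigma>: "pr \<sigma> = pr \<sigma>tr - a" and dev_tr: "dev \<sigma>tr = dev \<sigma> + \<beta> *\<^sub>R n"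
    using update stress_update_iff[OF subdiff_rho_traceless[OF n]] by auto
  have "0 \<le> \<beta>"
    using assms(1-3) \<open>0 \<le> dl\<close> rho_nonneg[of \<sigma>] by (simp add: \<beta>_def)
  have "dl \<noteq> 0"
  proof
    assume "dl = 0"
    then have "\<sigma> = \<sigma>tr"
      using update by (simp add: a_def \<beta>_def)
    then show False
      using admissible trial by simp
  qed
  then have "fhat m0 fc (pr \<sigma>) (rho \<sigma>) (rho_e e \<sigma>) = 0"
    using complementary by simp
  then show ?thesis
    using radial_return[OF n dev_tr \<open>0 \<le> \<beta>\<close>] pr_\<sigma>
    unfolding sysR_def a_def \<beta>_def by auto
qed

lemma sysR_multiplier_nonneg:
  assumes "0 < K" "0 \<le> G" "0 < m0" "0 < Ag" "0 < fc" "1/2 \<le> e" "e \<le> 1" "sym3 \<sigma>tr"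
    and trial: "0 < fhat m0 fc (pr \<sigma>tr) (rho \<sigma>tr) (rho_e e \<sigma>tr)"
    and R: "sysR K G m0 Ag Bg fc ft e \<sigma>tr p r dl"
  shows "0 \<le> dl"
proof (rule ccontr)
  assume "\<not> 0 \<le> dl"
  define q where "q = (if rho \<sigma>tr > 0 then r_e e (cos (theta \<sigma>tr)) else 0)"
  have "0 \<le> q"
    using r_e_nonneg[OF assms(6,7) cos_theta_ge_half[OF assms(8)]] by (simp add: q_def)
  have p: "p = pr \<sigma>tr - dl * (K * mg' Ag Bg fc ft p / fc)"
    and r: "r = pos_part (rho \<sigma>tr - dl * (2 * G * (3 * r / fc\<^sup>2 + m0 / (sqrt 6 * fc))))"
    and yield: "fhat m0 fc p r (r * q) = 0"
    using R by (auto simp: sysR_def q_def mult.assoc)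
  have "0 < K * mg' Ag Bg fc ft p / fc"
    using assms(1,4,5) by (simp add: mg'_def)
  then have "pr \<sigma>tr < p"
    using p \<open>\<not> 0 \<le> dl\<close> by (smt (verit) mult_neg_pos)
  have "0 \<le> r"
    using r by (simp add: pos_part_def)
  then have "0 \<le> 2 * G * (3 * r / fc\<^sup>2 + m0 / (sqrt 6 * fc))"
    using assms(2,3,5) by simp
  then have "rho \<sigma>tr \<le> r"
    using r \<open>\<not> 0 \<le> dl\<close> by (smt (verit) mult_nonpos_nonneg pos_part_def)
  then have "fhat m0 fc (pr \<sigma>tr) (rho \<sigma>tr) (rho \<sigma>tr * q) < fhat m0 fc p r (r * q)"
    using fhat_strict_mono[OF assms(3,5) \<open>0 \<le> q\<close> \<open>pr \<sigma>tr < p\<close> rho_nonneg] by blast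
  moreover have "rho \<sigma>tr * q = rho_e e \<sigma>tr"
    by (simp add: q_def rho_e_def)
  ultimately show False
    using trial yield by simp
qed

lemma sysR_imp_probP:
  assumes "0 \<le> G" "0 \<le> m0" "0 \<le> fc" "sym3 \<sigma>tr" "0 \<le> dl"
    and R: "sysR K G m0 Ag Bg fc ft e \<sigma>tr p r dl"
  shows "probP K G m0 Ag Bg fc ft e \<sigma>tr
           (if rho \<sigma>tr > dl * 2 * G * (3 * r / fc\<^sup>2 + m0 / (sqrt 6 * fc))
            then p *\<^sub>R Id3 + r *\<^sub>R (dev \<sigma>tr /\<^sub>R rho \<sigma>tr)
            else p *\<^sub>R Id3) dl"
    (is "probP K G m0 Ag Bg fc ft e \<sigma>tr ?\<sigma> dl")
proof -
  define a where "a = dl * K * mg' Ag Bg fc ft p / fc"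
  define \<beta> where "\<beta> = dl * 2 * G * (3 * r / fc\<^sup>2 + m0 / (sqrt 6 * fc))"
  have p: "p = pr \<sigma>tr - a"
    and r: "r = pos_part (rho \<sigma>tr - \<beta>)"
    and yield: "fhat m0 fc p r (r * (if rho \<sigma>tr > 0 then r_e e (cos (theta \<sigma>tr)) else 0)) = 0"
    using R by (auto simp: sysR_def a_def \<beta>_def)
  have "0 \<le> r"
    using r by (simp add: pos_part_def)
  then have "0 \<le> \<beta>"
    using assms(1-3,5) by (simp add: \<beta>_def)
  define \<sigma> where "\<sigma> = (if \<beta> < rho \<sigma>tr then p *\<^sub>R Id3 + r *\<^sub>R (dev \<sigma>tr /\<^sub>R rho \<sigma>tr) else p *\<^sub>R Id3)"
  note return = radial_return_exists[OF assms(4) \<open>0 \<le> \<beta>\<close> r, of p, folded \<sigma>_def]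
  obtain n where n: "n \<in> subdiff_rho \<sigma>" and dev_tr: "dev \<sigma>tr = dev \<sigma> + \<beta> *\<^sub>R n"
    using return(3) by blast
  have "rho \<sigma> = r"
    using radial_return(1)[OF n dev_tr \<open>0 \<le> \<beta>\<close>] r by simp
  moreover have "rho_e e \<sigma> = r * (if rho \<sigma>tr > 0 then r_e e (cos (theta \<sigma>tr)) else 0)"
    using radial_return(2)[OF n dev_tr \<open>0 \<le> \<beta>\<close>] \<open>rho \<sigma> = r\<close> by simp
  moreover have "\<sigma> = \<sigma>tr - a *\<^sub>R Id3 - \<beta> *\<^sub>R n"
    using stress_update_iff[OF subdiff_rho_traceless[OF n]] return(2) p dev_tr by simp
  ultimately have "probP K G m0 Ag Bg fc ft e \<sigma>tr \<sigma> dl"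
    unfolding probP_def using return(1,2) n yield \<open>0 \<le> dl\<close>
    by (auto simp: a_def \<beta>_def mult.assoc)
  moreover have "?\<sigma> = \<sigma>"
    by (simp add: \<sigma>_def \<beta>_def)
  ultimately show ?thesis
    by simp
qed

theorem theorem5:
  fixes K G m0 Ag Bg fc ft e :: real and \<sigma>tr :: mat3
  assumes "K > 0" "G > 0" "m0 > 0" "Ag > 0" "Bg > 0" "fc > 0" "ft > 0"
    and "1/2 \<le> e" "e \<le> 1"
    and "sym3 \<sigma>tr"
    and "fhat m0 fc (pr \<sigma>tr) (rho \<sigma>tr) (rho_e e \<sigma>tr) > 0"
  shows "(\<forall>\<sigma> dl. probP K G m0 Ag Bg fc ft e \<sigma>tr \<sigma> dl \<longrightarrow>
             sysR K G m0 Ag Bg fc ft e \<sigma>tr (pr \<sigma>) (rho \<sigma>) dl)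
       \<and> (\<forall>p r dl. sysR K G m0 Ag Bg fc ft e \<sigma>tr p r dl \<longrightarrow>
             probP K G m0 Ag Bg fc ft e \<sigma>tr
               (if rho \<sigma>tr > dl * 2 * G * (3 * r / fc\<^sup>2 + m0 / (sqrt 6 * fc))
                then p *\<^sub>R Id3 + r *\<^sub>R (dev \<sigma>tr /\<^sub>R rho \<sigma>tr)
                else p *\<^sub>R Id3) dl)"
proof (intro conjI allI impI)
  fix \<sigma> dl
  assume "probP K G m0 Ag Bg fc ft e \<sigma>tr \<sigma> dl"
  then show "sysR K G m0 Ag Bg fc ft e \<sigma>tr (pr \<sigma>) (rho \<sigma>) dl"
    using probP_imp_sysR assms(2,3,6,11) by (meson less_imp_le)
next
  fix p r dl
  assume R: "sysR K G m0 Ag Bg fc ft e \<sigma>tr p r dl"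
  then have "0 \<le> dl"
    using sysR_multiplier_nonneg assms(1-4,6,8-11) by (meson less_imp_le)
  then show "probP K G m0 Ag Bg fc ft e \<sigma>tr
               (if rho \<sigma>tr > dl * 2 * G * (3 * r / fc\<^sup>2 + m0 / (sqrt 6 * fc))
                then p *\<^sub>R Id3 + r *\<^sub>R (dev \<sigma>tr /\<^sub>R rho \<sigma>tr)
                else p *\<^sub>R Id3) dl"
    using sysR_imp_probP assms(2,3,6,10) R by (meson less_imp_le)
qed

end
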